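(* Let $(\alpha_i)_{i\in I}$, $I=\{1,2,\dots\}\cup\{\omega\}$, be a family of non-negative reals, let $j$ be a positive integer, and let $(\beta_i)_{i\in I}$ be obtained from $(\alpha_i)$ by rearranging $\alpha_j,\alpha_{j+1}$ from smaller to larger, i.e. $\beta_j=\min(\alpha_j,\alpha_{j+1})$, $\beta_{j+1}=\max(\alpha_j,\alpha_{j+1})$, and $\beta_i=\alpha_i$ for $i\notin\{j,j+1\}$. If $\kappa_i(\alpha_i)$ and $\kappa_i(\beta_i)$ converge, then $\kappa_i(\alpha_i)\ge\kappa_i(\beta_i)$.
   Context: For a family $(\gamma_i)_{i\in I}$ of non-negative reals (with $n<\omega$ for all positive integers $n$), $\kappa_i(\gamma_i)$ is the limit of the approximants $P_0=\gamma_\omega$, $P_n=\sqrt{\gamma_1^{2^1}+\sqrt{\gamma_2^{2^2}+\dots+\sqrt{\gamma_n^{2^n}+\gamma_\omega^{2^n}}}}$ ($n$ nested roots). *)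

theory Defs
  imports Complex_Main
begin

text \<open>A family indexed by I = {1,2,...} \<union> {omega} is represented by a function
  g :: nat \<Rightarrow> real (only the values at positive indices matter) together with a real w
  (the value at omega).\<close>

definition kappa_approx :: "(nat \<Rightarrow> real) \<Rightarrow> real \<Rightarrow> nat \<Rightarrow> real" where
  "kappa_approx g w n = foldr (\<lambda>i x. sqrt (g i ^ (2 ^ i) + x)) [1..<Suc n] (w ^ (2 ^ n))"

definition kappa_converges :: "(nat \<Rightarrow> real) \<Rightarrow> real \<Rightarrow> bool" where
  "kappa_converges g w = convergent (kappa_approx g w)"

definition kappa :: "(nat \<Rightarrow> real) \<Rightarrow> real \<Rightarrow> real" where
  "kappa g w = lim (kappa_approx g w)"

end

theory Submission
  imports Defs
begin

text \<open>For \<open>n > j\<close> the approximants differ only in the two roots at depth \<open>j\<close> and \<open>j + 1\<close>.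
  With \<open>A = \<alpha>\<^sub>j ^ 2^j\<close>, \<open>B = \<alpha>\<^sub>j\<^sub>+\<^sub>1 ^ 2^j\<close> and \<open>y\<close> the (common) inner value, the two
  expressions are \<open>sqrt (A + sqrt (B\<^sup>2 + y))\<close> and \<open>sqrt (B + sqrt (A\<^sup>2 + y))\<close>. Unless \<open>\<beta> = \<alpha>\<close>,
  \<open>B \<le> A\<close>, which forces the first to dominate because \<open>t \<mapsto> sqrt (t\<^sup>2 + y) - t\<close> is
  nonincreasing. As the outer roots are monotone, every approximant for \<alpha> dominates
  the corresponding one for \<beta>, and the inequality passes to the limits.\<close>

definition nested_sqrt :: "(nat \<Rightarrow> real) \<Rightarrow> nat list \<Rightarrow> real \<Rightarrow> real" where
  "nested_sqrt g is x = foldr (\<lambda>i x. sqrt (g i ^ 2 ^ i + x)) is x"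

lemma kappa_approx_eq_nested_sqrt:
  "kappa_approx g w n = nested_sqrt g [1..<Suc n] (w ^ 2 ^ n)"
  unfolding kappa_approx_def nested_sqrt_def ..

lemma nested_sqrt_Nil [simp]: "nested_sqrt g [] x = x"
  and nested_sqrt_Cons [simp]: "nested_sqrt g (i # is) x = sqrt (g i ^ 2 ^ i + nested_sqrt g is x)"
  and nested_sqrt_append: "nested_sqrt g (is @ js) x = nested_sqrt g is (nested_sqrt g js x)"
  unfolding nested_sqrt_def by simp_all

lemma nested_sqrt_mono: "x \<le> y \<Longrightarrow> nested_sqrt g is x \<le> nested_sqrt g is y"
  by (induction "is") auto

lemma nested_sqrt_nonneg:
  "0 \<le> x \<Longrightarrow> (\<And>i. i \<in> set is \<Longrightarrow> 0 \<le> g i) \<Longrightarrow> 0 \<le> nested_sqrt g is x"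
  by (induction "is") auto

lemma nested_sqrt_cong: "(\<And>i. i \<in> set is \<Longrightarrow> g i = h i) \<Longrightarrow> nested_sqrt g is x = nested_sqrt h is x"
  by (induction "is") auto

lemma add_sqrt_square_swap_le:
  fixes a b x :: real
  assumes "b \<le> a" "0 \<le> x"
  shows "b + sqrt (a\<^sup>2 + x) \<le> a + sqrt (b\<^sup>2 + x)"
proof -
  define s where "s = sqrt (b\<^sup>2 + x)"
  have "b \<le> s"
    unfolding s_def using assms(2) real_sqrt_abs[of b] real_sqrt_le_mono[of "b\<^sup>2" "b\<^sup>2 + x"] by linarith
  then have "a\<^sup>2 + x \<le> (a - b + s)\<^sup>2"
    using assms mult_nonneg_nonneg[of "a - b" "s - b"]
    by (simp add: s_def power2_eq_square algebra_simps)
  moreover have "0 \<le> a - b + s"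
    using assms by (simp add: s_def)
  ultimately have "sqrt (a\<^sup>2 + x) \<le> a - b + s"
    by (rule real_le_lsqrt[rotated])
  then show ?thesis
    unfolding s_def by simp
qed

lemma nested_sqrt_sort_pair_le:
  assumes "0 \<le> g (Suc j)" "0 \<le> y"
  shows "nested_sqrt (g(j := min (g j) (g (Suc j)), Suc j := max (g j) (g (Suc j)))) [j, Suc j] y
    \<le> nested_sqrt g [j, Suc j] y"
proof (cases "g j \<le> g (Suc j)")
  case True
  then show ?thesis by simp
next
  case False
  have square: "c ^ (2 * 2 ^ j) = (c ^ 2 ^ j)\<^sup>2" for c :: real
    by (metis power_mult mult.commute)
  have "g (Suc j) ^ 2 ^ j \<le> g j ^ 2 ^ j"
    using False assms(1) by (intro power_mono) auto
  from add_sqrt_square_swap_le[OF this assms(2)]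
  show ?thesis
    using False by (simp add: square)
qed

lemma upt_split_pair:
  assumes "1 \<le> j" "j < n"
  shows "[1..<Suc n] = [1..<j] @ [j, Suc j] @ [Suc (Suc j)..<Suc n]"
proof -
  have "[1..<Suc n] = [1..<j] @ [j..<Suc n]"
    using assms upt_add_eq_append[of 1 j "Suc n - j"] by simp
  also have "[j..<Suc n] = [j, Suc j] @ [Suc (Suc j)..<Suc n]"
    using assms by (simp add: upt_conv_Cons)
  finally show ?thesis .
qed

lemma kappa_approx_sort_pair_le:
  fixes \<alpha> :: "nat \<Rightarrow> real"
  assumes "\<forall>i\<ge>1. \<alpha> i \<ge> 0" "0 \<le> w" "1 \<le> j" "j < n"
    and \<beta>: "\<beta> = \<alpha>(j := min (\<alpha> j) (\<alpha> (Suc j)), Suc j := max (\<alpha> j) (\<alpha> (Suc j)))"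
  shows "kappa_approx \<beta> w n \<le> kappa_approx \<alpha> w n"
proof -
  define inner where "inner = nested_sqrt \<alpha> [Suc (Suc j)..<Suc n] (w ^ 2 ^ n)"
  have "nested_sqrt \<beta> [Suc (Suc j)..<Suc n] (w ^ 2 ^ n) = inner"
    unfolding inner_def \<beta> by (rule nested_sqrt_cong) auto
  moreover have "nested_sqrt \<beta> [1..<j] x = nested_sqrt \<alpha> [1..<j] x" for x
    unfolding \<beta> by (rule nested_sqrt_cong) auto
  moreover have "0 \<le> inner"
    unfolding inner_def using assms(1,2) by (intro nested_sqrt_nonneg) auto
  then have "nested_sqrt \<beta> [j, Suc j] inner \<le> nested_sqrt \<alpha> [j, Suc j] inner"
    unfolding \<beta> using assms(1,3) by (intro nested_sqrt_sort_pair_le) auto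
  ultimately show ?thesis
    unfolding kappa_approx_eq_nested_sqrt upt_split_pair[OF assms(3,4)] nested_sqrt_append
    by (simp add: inner_def nested_sqrt_mono)
qed

theorem lemma10:
  fixes \<alpha> :: "nat \<Rightarrow> real" and \<alpha>\<omega> :: real and j :: nat
  assumes "\<forall>i\<ge>1. \<alpha> i \<ge> 0" and "\<alpha>\<omega> \<ge> 0" and "j \<ge> 1"
    and "\<beta> = \<alpha>(j := min (\<alpha> j) (\<alpha> (Suc j)), Suc j := max (\<alpha> j) (\<alpha> (Suc j)))"
    and "kappa_converges \<alpha> \<alpha>\<omega>" and "kappa_converges \<beta> \<alpha>\<omega>"
  shows "kappa \<alpha> \<alpha>\<omega> \<ge> kappa \<beta> \<alpha>\<omega>"
proof -
  have "kappa_approx \<alpha> \<alpha>\<omega> \<longlonglongrightarrow> kappa \<alpha> \<alpha>\<omega>" "kappa_approx \<beta> \<alpha>\<omega> \<longlonglongrightarrow> kappa \<beta> \<alpha>\<omega>"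
    using assms(5,6) by (simp_all add: kappa_converges_def kappa_def convergent_LIMSEQ_iff)
  moreover have "\<forall>n\<ge>Suc j. kappa_approx \<beta> \<alpha>\<omega> n \<le> kappa_approx \<alpha> \<alpha>\<omega> n"
    using kappa_approx_sort_pair_le[OF assms(1-3) _ assms(4)] by simp
  ultimately show ?thesis
    by (intro LIMSEQ_le) auto
qed

end
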